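(* Consider the iteration: start from any $(\underline p^{(0)},\underline\psi^{(0)})\in\mathcal F$; at step $t$, set $\mu^{(t)}_{lk}=\beta_{llk}\sqrt{p^{(t)}_{lk}}\,D_l^{-1}\psi^{(t)}_{lk}$ (with $D_l$ evaluated at $(\underline p^{(t)},\underline\psi^{(t)})$), and then let $(\underline p^{(t+1)},\underline\psi^{(t+1)})$ be a maximizer of $f(\cdot,\cdot,\underline\mu^{(t)})$ over $\mathcal F$. Then the weighted sum MSE $\sum_{(l,k)}\alpha_{lk}\mathsf{MSE}_{lk}$ evaluated at $(\underline p^{(t)},\underline\psi^{(t)})$ is nonincreasing in $t$.
   Context: $L$ cells indexed by $l,i$, each with $K$ users indexed by $k,j$, $K\le\tau$; sums over $(i,j)$ or $(l,k)$ range over all $LK$ users. $M$ antennas per base station; noise variance $\sigma^2>0$; power budget $P_{\max}>0$; large-scale fading $\beta_{lij}>0$; weights $\alpha_{lk}>0$. $\{\varphi_1,\dots,\varphi_\tau\}\subset\mathbb C^\tau$ satisfy $\varphi_s^H\varphi_t=\tau$ if $s=t$ and $0$ otherwise. The feasible set $\mathcal F$ consists of $(\underline p,\underline\psi)$ with $0\le p_{lk}\le P_{\max}$, $\psi_{lk}\in\{\varphi_1,\dots,\varphi_\tau\}$, and $\psi_{lk}\ne\psi_{lk'}$ for $k\ne k'$. Pilot of user $(l,k)$ is $\phi_{lk}=\sqrt{p_{lk}}\psi_{lk}$. $D_l=\sigma^2I_\tau+\sum_{(i,j)}\beta_{lij}p_{ij}\psi_{ij}\psi_{ij}^H$; $\mathsf{MSE}_{lk}=M\beta_{llk}-M\beta_{llk}^2p_{lk}\psi_{lk}^HD_l^{-1}\psi_{lk}$;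 $f(\underline p,\underline\psi,\underline\mu)=\sum_{(l,k)}\alpha_{lk}\big(2\beta_{llk}\sqrt{p_{lk}}\Re\{\mu_{lk}^H\psi_{lk}\}-\mu_{lk}^HD_l\mu_{lk}\big)$ with $\mu_{lk}\in\mathbb C^\tau$. *)

theory Defs
  imports "HOL-Analysis.Analysis"
begin

definition hip :: "complex^'t \<Rightarrow> complex^'t \<Rightarrow> complex" where
  "hip x y = (\<Sum>a\<in>UNIV. cnj (x $ a) * y $ a)"

definition feasible ::
  "nat \<Rightarrow> nat \<Rightarrow> real \<Rightarrow> (nat \<Rightarrow> complex^'t)
   \<Rightarrow> (nat \<Rightarrow> nat \<Rightarrow> real) \<Rightarrow> (nat \<Rightarrow> nat \<Rightarrow> complex^'t) \<Rightarrow> bool" where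
  "feasible L K Pmax phi p psi \<longleftrightarrow>
     (\<forall>l<L. \<forall>k<K. 0 \<le> p l k \<and> p l k \<le> Pmax) \<and>
     (\<forall>l<L. \<forall>k<K. psi l k \<in> phi ` {..<CARD('t)}) \<and>
     (\<forall>l<L. \<forall>k<K. \<forall>k'<K. k \<noteq> k' \<longrightarrow> psi l k \<noteq> psi l k')"

definition Dmat ::
  "nat \<Rightarrow> nat \<Rightarrow> real \<Rightarrow> (nat \<Rightarrow> nat \<Rightarrow> nat \<Rightarrow> real)
   \<Rightarrow> (nat \<Rightarrow> nat \<Rightarrow> real) \<Rightarrow> (nat \<Rightarrow> nat \<Rightarrow> complex^'t) \<Rightarrow> nat \<Rightarrow> complex^'t^'t" where
  "Dmat L K sigma2 beta p psi l =
     (\<chi> a b. (if a = b then complex_of_real sigma2 else 0) +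
        (\<Sum>i<L. \<Sum>j<K. complex_of_real (beta l i j * p i j) * (psi i j $ a) * cnj (psi i j $ b)))"

text \<open>MSE_{lk} = M beta_{llk} - M beta_{llk}^2 p_{lk} psi_{lk}^H D_l^{-1} psi_{lk}
  (the quadratic form is real since D_l is Hermitian positive definite; we take its real part).\<close>
definition MSE ::
  "nat \<Rightarrow> nat \<Rightarrow> nat \<Rightarrow> real \<Rightarrow> (nat \<Rightarrow> nat \<Rightarrow> nat \<Rightarrow> real)
   \<Rightarrow> (nat \<Rightarrow> nat \<Rightarrow> real) \<Rightarrow> (nat \<Rightarrow> nat \<Rightarrow> complex^'t) \<Rightarrow> nat \<Rightarrow> nat \<Rightarrow> real" where
  "MSE L K M sigma2 beta p psi l k =
     real M * beta l l k - real M * (beta l l k)^2 * p l k *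
       Re (hip (psi l k) (matrix_inv (Dmat L K sigma2 beta p psi l) *v psi l k))"

definition WSMSE ::
  "nat \<Rightarrow> nat \<Rightarrow> nat \<Rightarrow> real \<Rightarrow> (nat \<Rightarrow> nat \<Rightarrow> nat \<Rightarrow> real) \<Rightarrow> (nat \<Rightarrow> nat \<Rightarrow> real)
   \<Rightarrow> (nat \<Rightarrow> nat \<Rightarrow> real) \<Rightarrow> (nat \<Rightarrow> nat \<Rightarrow> complex^'t) \<Rightarrow> real" where
  "WSMSE L K M sigma2 beta alpha p psi =
     (\<Sum>l<L. \<Sum>k<K. alpha l k * MSE L K M sigma2 beta p psi l k)"

text \<open>f(p,psi,mu) = sum alpha_{lk} (2 beta_{llk} sqrt p_{lk} Re(mu^H psi) - mu^H D_l mu)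
  (mu^H D_l mu is real; real part taken).\<close>
definition fobj ::
  "nat \<Rightarrow> nat \<Rightarrow> real \<Rightarrow> (nat \<Rightarrow> nat \<Rightarrow> nat \<Rightarrow> real) \<Rightarrow> (nat \<Rightarrow> nat \<Rightarrow> real)
   \<Rightarrow> (nat \<Rightarrow> nat \<Rightarrow> real) \<Rightarrow> (nat \<Rightarrow> nat \<Rightarrow> complex^'t) \<Rightarrow> (nat \<Rightarrow> nat \<Rightarrow> complex^'t) \<Rightarrow> real" where
  "fobj L K sigma2 beta alpha p psi mu =
     (\<Sum>l<L. \<Sum>k<K. alpha l k *
        (2 * beta l l k * sqrt (p l k) * Re (hip (mu l k) (psi l k))
         - Re (hip (mu l k) (Dmat L K sigma2 beta p psi l *v mu l k))))"

definition mu_update ::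
  "nat \<Rightarrow> nat \<Rightarrow> real \<Rightarrow> (nat \<Rightarrow> nat \<Rightarrow> nat \<Rightarrow> real)
   \<Rightarrow> (nat \<Rightarrow> nat \<Rightarrow> real) \<Rightarrow> (nat \<Rightarrow> nat \<Rightarrow> complex^'t) \<Rightarrow> nat \<Rightarrow> nat \<Rightarrow> complex^'t" where
  "mu_update L K sigma2 beta p psi l k =
     complex_of_real (beta l l k * sqrt (p l k)) *s
       (matrix_inv (Dmat L K sigma2 beta p psi l) *v psi l k)"

end

theory Submission
  imports Defs
begin

text \<open>Completing the square with respect to the positive definite Hermitian matrix \<open>D\<^sub>l\<close>
  gives \<open>f(p,\<psi>,\<mu>) \<le> G(p,\<psi>) = \<Sum> \<alpha>\<^sub>l\<^sub>k \<beta>\<^sub>l\<^sub>l\<^sub>k\<^sup>2 p\<^sub>l\<^sub>k \<psi>\<^sub>l\<^sub>k\<^sup>H D\<^sub>l\<^sup>-\<^sup>1 \<psi>\<^sub>l\<^sub>k\<close> for every \<open>\<mu>\<close>, with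
  equality at the update \<open>\<mu>(p,\<psi>)\<close>.  Since the weighted sum MSE is \<open>M \<Sum> \<alpha>\<^sub>l\<^sub>k \<beta>\<^sub>l\<^sub>l\<^sub>k - M G\<close>,
  the iteration is a block ascent of \<open>G\<close>:
  \<open>G(t) = f(t, \<mu>(t)) \<le> f(t+1, \<mu>(t)) \<le> G(t+1)\<close>.\<close>

lemma hip_diff_left: "hip (x - y) z = hip x z - hip y z"
  by (simp add: hip_def sum_subtractf algebra_simps)

lemma hip_diff_right: "hip x (y - z) = hip x y - hip x z"
  by (simp add: hip_def sum_subtractf algebra_simps)

lemma hip_scale_left: "hip (c *s x) y = cnj c * hip x y"
  by (simp add: hip_def sum_distrib_left algebra_simps)

lemma hip_scale_right: "hip x (c *s y) = c * hip x y"
  by (simp add: hip_def sum_distrib_left algebra_simps)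

lemma hip_commute: "hip y x = cnj (hip x y)"
  by (simp add: hip_def cnj_sum mult.commute)

lemma Re_cnj_mult_self: "Re (cnj z * z) = (cmod z)\<^sup>2"
  by (subst cmod_power2) (simp add: power2_eq_square)

lemma Re_hip_self: "Re (hip x x) = (\<Sum>a\<in>UNIV. (cmod (x $ a))\<^sup>2)"
  by (simp only: hip_def Re_sum Re_cnj_mult_self)

lemma Re_hip_self_pos:
  assumes "x \<noteq> 0"
  shows "0 < Re (hip x x)"
proof -
  obtain a where "x $ a \<noteq> 0"
    using assms by (auto simp: vec_eq_iff)
  then have "0 < (cmod (x $ a))\<^sup>2"
    by simp
  also have "\<dots> \<le> (\<Sum>b\<in>UNIV. (cmod (x $ b))\<^sup>2)"
    by (rule member_le_sum) auto
  finally show ?thesis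
    by (simp only: Re_hip_self)
qed

definition hermitian :: "complex^'n^'n \<Rightarrow> bool" where
  "hermitian A \<longleftrightarrow> (\<forall>i j. A $ j $ i = cnj (A $ i $ j))"

lemma hip_hermitian:
  assumes "hermitian A"
  shows "hip x (A *v y) = cnj (hip y (A *v x))"
proof -
  have A: "cnj (A $ j $ i) = A $ i $ j" for i j
    using assms unfolding hermitian_def by (metis complex_cnj_cnj)
  have "hip x (A *v y) = (\<Sum>i\<in>UNIV. \<Sum>j\<in>UNIV. cnj (x $ i) * A $ i $ j * y $ j)"
    by (simp add: hip_def matrix_vector_mult_def sum_distrib_left mult.assoc)
  also have "\<dots> = (\<Sum>j\<in>UNIV. \<Sum>i\<in>UNIV. cnj (x $ i) * A $ i $ j * y $ j)"
    by (rule sum.swap)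
  also have "\<dots> = cnj (hip y (A *v x))"
    by (simp add: hip_def matrix_vector_mult_def sum_distrib_left cnj_sum A ac_simps)
  finally show ?thesis .
qed

lemma completed_square_bound:
  assumes "hermitian A" and psd: "\<And>x. 0 \<le> Re (hip x (A *v x))" and w: "A *v w = v"
  shows "2 * Re (hip \<mu> v) - Re (hip \<mu> (A *v \<mu>)) \<le> Re (hip w v)"
proof -
  have "0 \<le> Re (hip (\<mu> - w) (A *v (\<mu> - w)))"
    by (rule psd)
  also have "\<dots> = Re (hip \<mu> (A *v \<mu>)) - Re (hip \<mu> v) - Re (hip w (A *v \<mu>)) + Re (hip w v)"
    by (simp add: matrix_vector_mult_diff_distrib hip_diff_left hip_diff_right w)
  also have "Re (hip w (A *v \<mu>)) = Re (hip \<mu> v)"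
    using hip_hermitian[OF \<open>hermitian A\<close>, of w \<mu>] w by simp
  finally show ?thesis
    by simp
qed

lemma invertible_if_positive_definite:
  fixes A :: "complex^'n^'n"
  assumes "\<And>x. x \<noteq> 0 \<Longrightarrow> 0 < Re (hip x (A *v x))"
  shows "invertible A"
proof -
  have "x = 0" if "A *v x = 0" for x
    using assms[of x] that by (auto simp: hip_def)
  then show ?thesis
    unfolding invertible_left_inverse matrix_left_invertible_ker by blast
qed

lemma matrix_vector_mult_matrix_inv:
  fixes A :: "complex^'n^'n"
  assumes "invertible A"
  shows "A *v (matrix_inv A *v y) = y"
proof -
  have "A ** matrix_inv A = mat 1"
    using assms unfolding invertible_def matrix_inv_def
    by (rule someI_ex[where P = "\<lambda>B. A ** B = mat 1 \<and> B ** A = mat 1", THEN conjunct1])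
  then show ?thesis
    by (simp add: matrix_vector_mul_assoc)
qed

lemma matrix_vector_mult_scale: "(A::complex^'n^'n) *v (c *s x) = c *s (A *v x)"
  by (simp add: vec_eq_iff matrix_vector_mult_def sum_distrib_left algebra_simps)

lemma scaled_completed_square:
  fixes A :: "complex^'n^'n" and b :: real and y :: "complex^'n"
  assumes "hermitian A" and psd: "\<And>x. 0 \<le> Re (hip x (A *v x))" and "invertible A"
  defines "w \<equiv> complex_of_real b *s (matrix_inv A *v y)"
  shows "2 * b * Re (hip \<mu> y) - Re (hip \<mu> (A *v \<mu>))
           \<le> b\<^sup>2 * Re (hip y (matrix_inv A *v y))"
    and "2 * b * Re (hip w y) - Re (hip w (A *v w)) = b\<^sup>2 * Re (hip y (matrix_inv A *v y))"
proof -
  define v where "v = complex_of_real b *s y"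
  have Aw: "A *v w = v"
    unfolding w_def v_def matrix_vector_mult_scale
    by (simp add: matrix_vector_mult_matrix_inv[OF \<open>invertible A\<close>])
  have hip_v: "Re (hip x v) = b * Re (hip x y)" for x
    by (simp add: v_def hip_scale_right)
  have "hip w v = complex_of_real (b\<^sup>2) * cnj (hip y (matrix_inv A *v y))"
    by (simp add: w_def v_def hip_scale_left hip_scale_right power2_eq_square
        hip_commute[of "matrix_inv A *v y" y])
  then have hip_wv: "Re (hip w v) = b\<^sup>2 * Re (hip y (matrix_inv A *v y))"
    by simp
  show "2 * b * Re (hip \<mu> y) - Re (hip \<mu> (A *v \<mu>)) \<le> b\<^sup>2 * Re (hip y (matrix_inv A *v y))"
    using completed_square_bound[OF \<open>hermitian A\<close> psd Aw, of \<mu>] hip_v[of \<mu>] hip_wv by simp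
  show "2 * b * Re (hip w y) - Re (hip w (A *v w)) = b\<^sup>2 * Re (hip y (matrix_inv A *v y))"
    using hip_v[of w] hip_wv by (simp add: Aw)
qed

lemma Dmat_mult_vec:
  "(Dmat L K s beta p psi l *v x) $ a =
     complex_of_real s * x $ a +
     (\<Sum>i<L. \<Sum>j<K. complex_of_real (beta l i j * p i j) * psi i j $ a * hip (psi i j) x)"
proof -
  have "(Dmat L K s beta p psi l *v x) $ a =
     (\<Sum>b\<in>UNIV. (if a = b then complex_of_real s else 0) * x $ b) +
     (\<Sum>b\<in>UNIV. \<Sum>i<L. \<Sum>j<K.
        complex_of_real (beta l i j * p i j) * psi i j $ a * (cnj (psi i j $ b) * x $ b))"
    unfolding matrix_vector_mult_def Dmat_def
    by (simp only: vec_lambda_beta distrib_right sum.distrib sum_distrib_right mult.assoc)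
  also have "(\<Sum>b\<in>UNIV. (if a = b then complex_of_real s else 0) * x $ b) = complex_of_real s * x $ a"
    by (simp add: if_distrib[of "\<lambda>c. c * _"] cong: if_cong)
  also have "(\<Sum>b\<in>UNIV. \<Sum>i<L. \<Sum>j<K.
        complex_of_real (beta l i j * p i j) * psi i j $ a * (cnj (psi i j $ b) * x $ b))
     = (\<Sum>i<L. \<Sum>j<K. \<Sum>b\<in>UNIV.
        complex_of_real (beta l i j * p i j) * psi i j $ a * (cnj (psi i j $ b) * x $ b))"
    by (subst sum.swap, rule sum.cong[OF refl], rule sum.swap)
  also have "\<dots> = (\<Sum>i<L. \<Sum>j<K. complex_of_real (beta l i j * p i j) * psi i j $ a * hip (psi i j) x)"
    by (simp only: hip_def sum_distrib_left)
  finally show ?thesis .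
qed

lemma Re_hip_Dmat_self:
  "Re (hip x (Dmat L K s beta p psi l *v x)) =
     s * Re (hip x x) + (\<Sum>i<L. \<Sum>j<K. beta l i j * p i j * (cmod (hip (psi i j) x))\<^sup>2)"
proof -
  have "hip x (Dmat L K s beta p psi l *v x) =
     (\<Sum>a\<in>UNIV. complex_of_real s * (cnj (x $ a) * x $ a)) + (\<Sum>a\<in>UNIV. \<Sum>i<L. \<Sum>j<K.
        complex_of_real (beta l i j * p i j) * (cnj (x $ a) * psi i j $ a) * hip (psi i j) x)"
    unfolding hip_def[of x] Dmat_mult_vec sum.distrib[symmetric]
    by (rule sum.cong) (simp_all add: distrib_left sum_distrib_left ac_simps)
  also have "\<dots> = complex_of_real s * hip x x + (\<Sum>i<L. \<Sum>j<K. \<Sum>a\<in>UNIV.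
        complex_of_real (beta l i j * p i j) * (cnj (x $ a) * psi i j $ a) * hip (psi i j) x)"
    by (simp only: hip_def sum_distrib_left, subst sum.swap, subst (2) sum.swap) (rule refl)
  also have "\<dots> = complex_of_real s * hip x x + (\<Sum>i<L. \<Sum>j<K.
        complex_of_real (beta l i j * p i j) * (hip x (psi i j) * hip (psi i j) x))"
    by (simp only: hip_def[of x] sum_distrib_left sum_distrib_right mult.assoc)
  also have "\<dots> = complex_of_real s * hip x x + (\<Sum>i<L. \<Sum>j<K.
        complex_of_real (beta l i j * p i j * (cmod (hip (psi i j) x))\<^sup>2))"
    by (simp only: hip_commute[of x "psi _ _"] complex_norm_square of_real_mult mult.commute)
  finally show ?thesis
    by (simp add: Re_sum)
qed

lemma hermitian_Dmat: "hermitian (Dmat L K s beta p psi l)"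
  by (simp add: hermitian_def Dmat_def cnj_sum ac_simps eq_commute)

lemma Dmat_positive_definite:
  assumes "s > 0" and "\<And>i j. i < L \<Longrightarrow> j < K \<Longrightarrow> 0 \<le> beta l i j * p i j" and "x \<noteq> 0"
  shows "0 < Re (hip x (Dmat L K s beta p psi l *v x))"
proof -
  have "0 < s * Re (hip x x)"
    using \<open>s > 0\<close> Re_hip_self_pos[OF \<open>x \<noteq> 0\<close>] by simp
  moreover have "0 \<le> (\<Sum>i<L. \<Sum>j<K. beta l i j * p i j * (cmod (hip (psi i j) x))\<^sup>2)"
    using assms(2) by (intro sum_nonneg) auto
  ultimately show ?thesis
    by (simp only: Re_hip_Dmat_self)
qed

definition estimation_gain ::
  "nat \<Rightarrow> nat \<Rightarrow> real \<Rightarrow> (nat \<Rightarrow> nat \<Rightarrow> nat \<Rightarrow> real) \<Rightarrow> (nat \<Rightarrow> nat \<Rightarrow> real)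
   \<Rightarrow> (nat \<Rightarrow> nat \<Rightarrow> real) \<Rightarrow> (nat \<Rightarrow> nat \<Rightarrow> complex^'t) \<Rightarrow> real" where
  "estimation_gain L K s beta alpha p psi =
     (\<Sum>l<L. \<Sum>k<K. alpha l k *
        ((beta l l k)\<^sup>2 * p l k * Re (hip (psi l k) (matrix_inv (Dmat L K s beta p psi l) *v psi l k))))"

lemma WSMSE_eq_estimation_gain:
  "WSMSE L K M s beta alpha p psi =
     real M * (\<Sum>l<L. \<Sum>k<K. alpha l k * beta l l k) - real M * estimation_gain L K s beta alpha p psi"
  unfolding WSMSE_def estimation_gain_def MSE_def
  by (simp add: sum_subtractf sum_distrib_left algebra_simps)

context
  fixes L K :: nat and s :: real and beta :: "nat \<Rightarrow> nat \<Rightarrow> nat \<Rightarrow> real"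
    and p :: "nat \<Rightarrow> nat \<Rightarrow> real" and psi :: "nat \<Rightarrow> nat \<Rightarrow> complex^'t"
  assumes s_pos: "s > 0"
    and beta_nonneg: "\<And>l i j. l < L \<Longrightarrow> i < L \<Longrightarrow> j < K \<Longrightarrow> 0 \<le> beta l i j"
    and p_nonneg: "\<And>i j. i < L \<Longrightarrow> j < K \<Longrightarrow> 0 \<le> p i j"
begin

lemma fobj_summand_completed_square:
  assumes "l < L" and "k < K"
  shows "2 * beta l l k * sqrt (p l k) * Re (hip \<mu> (psi l k))
           - Re (hip \<mu> (Dmat L K s beta p psi l *v \<mu>))
         \<le> (beta l l k)\<^sup>2 * p l k * Re (hip (psi l k) (matrix_inv (Dmat L K s beta p psi l) *v psi l k))"
    and "2 * beta l l k * sqrt (p l k) * Re (hip (mu_update L K s beta p psi l k) (psi l k))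
           - Re (hip (mu_update L K s beta p psi l k) (Dmat L K s beta p psi l *v mu_update L K s beta p psi l k))
         = (beta l l k)\<^sup>2 * p l k * Re (hip (psi l k) (matrix_inv (Dmat L K s beta p psi l) *v psi l k))"
proof -
  let ?D = "Dmat L K s beta p psi l"
  have pd: "0 < Re (hip x (?D *v x))" if "x \<noteq> 0" for x
    using Dmat_positive_definite[OF s_pos _ that] beta_nonneg p_nonneg \<open>l < L\<close> by simp
  have psd: "0 \<le> Re (hip x (?D *v x))" for x
    using pd[of x] by (cases "x = 0") (auto simp: hip_def)
  have b2: "(beta l l k * sqrt (p l k))\<^sup>2 = (beta l l k)\<^sup>2 * p l k"
    using p_nonneg[OF assms] by (simp add: power_mult_distrib)
  note square = scaled_completed_square[OF hermitian_Dmat psd invertible_if_positive_definite[OF pd],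
      where b = "beta l l k * sqrt (p l k)", unfolded b2]
  show "2 * beta l l k * sqrt (p l k) * Re (hip \<mu> (psi l k)) - Re (hip \<mu> (?D *v \<mu>))
         \<le> (beta l l k)\<^sup>2 * p l k * Re (hip (psi l k) (matrix_inv ?D *v psi l k))"
    using square(1) by (simp add: mult.assoc)
  show "2 * beta l l k * sqrt (p l k) * Re (hip (mu_update L K s beta p psi l k) (psi l k))
           - Re (hip (mu_update L K s beta p psi l k) (?D *v mu_update L K s beta p psi l k))
         = (beta l l k)\<^sup>2 * p l k * Re (hip (psi l k) (matrix_inv ?D *v psi l k))"
    using square(2) by (simp add: mu_update_def mult.assoc)
qed

lemma fobj_le_estimation_gain:
  assumes "\<And>l k. l < L \<Longrightarrow> k < K \<Longrightarrow> 0 \<le> alpha l k"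
  shows "fobj L K s beta alpha p psi \<mu> \<le> estimation_gain L K s beta alpha p psi"
  unfolding fobj_def estimation_gain_def
  using assms fobj_summand_completed_square(1) by (intro sum_mono mult_left_mono) auto

lemma fobj_mu_update:
  "fobj L K s beta alpha p psi (mu_update L K s beta p psi) = estimation_gain L K s beta alpha p psi"
  unfolding fobj_def estimation_gain_def
  using fobj_summand_completed_square(2) by (intro sum.cong refl) auto

end

lemma feasible_power_nonneg: "feasible L K Pmax phi p psi \<Longrightarrow> i < L \<Longrightarrow> j < K \<Longrightarrow> 0 \<le> p i j"
  unfolding feasible_def by auto

theorem proposition4:
  fixes L K M :: nat and sigma2 Pmax :: real
    and beta :: "nat \<Rightarrow> nat \<Rightarrow> nat \<Rightarrow> real" and alpha :: "nat \<Rightarrow> nat \<Rightarrow> real"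
    and phi :: "nat \<Rightarrow> complex^'t"
    and pt :: "nat \<Rightarrow> nat \<Rightarrow> nat \<Rightarrow> real" and psit :: "nat \<Rightarrow> nat \<Rightarrow> nat \<Rightarrow> complex^'t"
  assumes KT: "K \<le> CARD('t)"
    and M: "M \<ge> 1"
    and sigma: "sigma2 > 0"
    and Pmax: "Pmax > 0"
    and beta_pos: "\<And>l i j. l < L \<Longrightarrow> i < L \<Longrightarrow> j < K \<Longrightarrow> beta l i j > 0"
    and alpha_pos: "\<And>l k. l < L \<Longrightarrow> k < K \<Longrightarrow> alpha l k > 0"
    and phi_orth: "\<And>s s'. s < CARD('t) \<Longrightarrow> s' < CARD('t) \<Longrightarrow>
                     hip (phi s) (phi s') = (if s = s' then of_nat CARD('t) else 0)"
    and init: "feasible L K Pmax phi (pt 0) (psit 0)"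
    and step_feas: "\<And>t. feasible L K Pmax phi (pt (Suc t)) (psit (Suc t))"
    and step_max: "\<And>t p psi. feasible L K Pmax phi p psi \<Longrightarrow>
          fobj L K sigma2 beta alpha p psi (mu_update L K sigma2 beta (pt t) (psit t))
          \<le> fobj L K sigma2 beta alpha (pt (Suc t)) (psit (Suc t))
               (mu_update L K sigma2 beta (pt t) (psit t))"
  shows "\<forall>t. WSMSE L K M sigma2 beta alpha (pt (Suc t)) (psit (Suc t))
             \<le> WSMSE L K M sigma2 beta alpha (pt t) (psit t)"
proof
  fix t
  let ?G = "\<lambda>t. estimation_gain L K sigma2 beta alpha (pt t) (psit t)"
  let ?\<mu> = "mu_update L K sigma2 beta (pt t) (psit t)"
  have feasible: "feasible L K Pmax phi (pt t) (psit t)" for t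
    using init step_feas by (cases t) auto
  have beta_nonneg: "\<And>l i j. l < L \<Longrightarrow> i < L \<Longrightarrow> j < K \<Longrightarrow> 0 \<le> beta l i j"
    using beta_pos by (simp add: less_imp_le)
  have gain_eq: "fobj L K sigma2 beta alpha (pt t') (psit t') (mu_update L K sigma2 beta (pt t') (psit t'))
      = ?G t'" for t'
    by (rule fobj_mu_update) (use sigma beta_nonneg feasible_power_nonneg[OF feasible] in auto)
  have gain_bound: "fobj L K sigma2 beta alpha (pt t') (psit t') \<mu> \<le> ?G t'" for t' \<mu>
    by (rule fobj_le_estimation_gain)
      (use sigma beta_nonneg feasible_power_nonneg[OF feasible] alpha_pos in \<open>auto simp: less_imp_le\<close>)
  have "?G t = fobj L K sigma2 beta alpha (pt t) (psit t) ?\<mu>"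
    by (rule gain_eq[symmetric])
  also have "\<dots> \<le> fobj L K sigma2 beta alpha (pt (Suc t)) (psit (Suc t)) ?\<mu>"
    by (rule step_max[OF feasible])
  also have "\<dots> \<le> ?G (Suc t)"
    by (rule gain_bound)
  finally show "WSMSE L K M sigma2 beta alpha (pt (Suc t)) (psit (Suc t))
      \<le> WSMSE L K M sigma2 beta alpha (pt t) (psit t)"
    unfolding WSMSE_eq_estimation_gain by (simp add: mult_left_mono)
qed

end
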